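(* Let $U=\begin{pmatrix} a & b\\ c & d\end{pmatrix}$ be a $2\times 2$ unitary matrix with $abcd\neq 0$, let $\varphi={}^t[\alpha,\beta]\in\mathbf{C}^2$ with $|\alpha|^2+|\beta|^2=1$, and let $X_n^{\varphi}$ be the position at time $n$ of the one-dimensional quantum random walk determined by $U$ started from $\varphi$ (defined in the context). Let $n\ge 1$ and $m\ge 1$ be integers, and write $\Re_\varphi = a\alpha\overline{b\beta}+\overline{a\alpha}b\beta$ and, for $1\le k$, $1\le \gamma,\delta\le k$, $$C_{k,\gamma,\delta}=\left(-\frac{|b|^2}{|a|^2}\right)^{\gamma+\delta}\binom{k-1}{\gamma-1}\binom{k-1}{\delta-1}\binom{n-k-1}{\gamma-1}\binom{n-k-1}{\delta-1}.$$ (i) If $m$ is odd, then $$E\big((X_n^{\varphi})^m\big)=|a|^{2(n-1)}\Big[-n^m\big\{(|a|^2-|b|^2)(|\alpha|^2-|\beta|^2)+2\Re_\varphi\big\}\Big]+\sum_{k=1}^{\lfloor (n-1)/2\rfloor}\sum_{\gamma=1}^{k}\sum_{\delta=1}^{k}C_{k,\gamma,\delta}\,\frac{(n-2k)^{m+1}}{\gamma\delta}\Big[-\{n(|a|^2-|b|^2)+\gamma+\delta\}(|\alpha|^2-|\beta|^2)+\Big(\frac{\gamma+\delta}{|b|^2}-2n\Big)\Re_\varphi\Big].$$ (ii) If $m$ is even, then $$E\big((X_n^{\varphi})^m\big)=|a|^{2(n-1)}\Big[n^m+\sum_{k=1}^{\lfloor (n-1)/2\rfloor}\sum_{\gamma=1}^{k}\sum_{\delta=1}^{k}C_{k,\gamma,\delta}\,\frac{(n-2k)^{m}}{\gamma\delta}\Big\{(n-k)^2+k^2-n(\gamma+\delta)+\frac{2\gamma\delta}{|b|^2}\Big\}\Big].$$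 In particular, for even $m$, $E((X_n^{\varphi})^m)$ does not depend on $\varphi$.
   Context: Quantum random walk on $\mathbf{Z}$ determined by a $2\times2$ unitary matrix $U=\begin{pmatrix} a & b\\ c & d\end{pmatrix}$: set $P=\begin{pmatrix} a & b\\ 0&0\end{pmatrix}$, $Q=\begin{pmatrix} 0&0\\ c & d\end{pmatrix}$ (so $U=P+Q$). Given an initial qubit state $\varphi={}^t[\alpha,\beta]\in\mathbf{C}^2$ with $|\alpha|^2+|\beta|^2=1$, define amplitudes $\Psi_k(n)\in\mathbf{C}^2$ ($k\in\mathbf{Z}$, $n\ge0$) by $\Psi_0(0)=\varphi$, $\Psi_k(0)=0$ for $k\neq0$, and $\Psi_k(n+1)=P\Psi_{k+1}(n)+Q\Psi_{k-1}(n)$. The random variable $X_n^{\varphi}$ takes value $k$ with probability $P(X_n^{\varphi}=k)=\|\Psi_k(n)\|^2$ (Euclidean norm squared); unitarity of $U$ makes this a probability distribution. $\lfloor x\rfloor$ is the integer part, $\overline{z}$ the complex conjugate. *)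

theory Defs
  imports "HOL-Analysis.Analysis"
begin

text \<open>P v = (a v1 + b v2, 0), Q v = (0, c v1 + d v2).\<close>
fun qw_amp :: "complex \<Rightarrow> complex \<Rightarrow> complex \<Rightarrow> complex \<Rightarrow> complex \<Rightarrow> complex
    \<Rightarrow> nat \<Rightarrow> int \<Rightarrow> complex \<times> complex" where
  "qw_amp a b c d \<alpha> \<beta> 0 k = (if k = 0 then (\<alpha>, \<beta>) else (0, 0))"
| "qw_amp a b c d \<alpha> \<beta> (Suc n) k =
     (let (x1, y1) = qw_amp a b c d \<alpha> \<beta> n (k + 1);
          (x2, y2) = qw_amp a b c d \<alpha> \<beta> n (k - 1)
      in (a * x1 + b * y1, c * x2 + d * y2))"

definition qw_prob :: "complex \<Rightarrow> complex \<Rightarrow> complex \<Rightarrow> complex \<Rightarrow> complex \<Rightarrow> complex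
    \<Rightarrow> nat \<Rightarrow> int \<Rightarrow> real" where
  "qw_prob a b c d \<alpha> \<beta> n k =
     (cmod (fst (qw_amp a b c d \<alpha> \<beta> n k)))\<^sup>2 + (cmod (snd (qw_amp a b c d \<alpha> \<beta> n k)))\<^sup>2"

definition qw_moment :: "complex \<Rightarrow> complex \<Rightarrow> complex \<Rightarrow> complex \<Rightarrow> complex \<Rightarrow> complex
    \<Rightarrow> nat \<Rightarrow> nat \<Rightarrow> real" where
  "qw_moment a b c d \<alpha> \<beta> n m = infsum (\<lambda>k::int. (real_of_int k) ^ m * qw_prob a b c d \<alpha> \<beta> n k) UNIV"

definition unitary2 :: "complex \<Rightarrow> complex \<Rightarrow> complex \<Rightarrow> complex \<Rightarrow> bool" where
  "unitary2 a b c d \<longleftrightarrow>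
     (a * cnj a + b * cnj b = 1 \<and> c * cnj c + d * cnj d = 1 \<and> a * cnj c + b * cnj d = 0
      \<and> cnj a * a + cnj c * c = 1 \<and> cnj b * b + cnj d * d = 1 \<and> cnj a * b + cnj c * d = 0)"

end

(*
  A path with l steps to the left and r steps to the right ends at position r - l, so at time n
  only the positions n - 2l are reachable and the moment is a finite sum over l. Summing the
  amplitudes over lattice paths gives, with X and Y the components of U phi and
  z = bc/(ad) = -|b|^2/|a|^2, the closed form
    a^p d^q (d X T(p,q) + b Y S(p,q), a Y T(q,p) + c X S(p,q))   for (l, r) = (p+1, q+1),
  where S(p,q) = sum_i C(p,i) C(q,i) z^i and T(p,q) = sum_i C(p,i+1) C(q,i) z^(i+1).
  Both T(p,q) and T(q,p) are affine in sigma_0 = z S(p,q) and in the antiderivative sigma_1 of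
  S(p,q) in z; these are the sums over gamma of weights whose products are the coefficients
  C_{k,gamma,delta}. Hence the probabilities of the mirror positions n - 2k and 2k - n add up to
  a quadratic form in (sigma_1, sigma_0) that does not depend on phi, while their difference is
  (n - 2k) times a quadratic form that is linear in |alpha|^2 - |beta|^2 and R. Pairing mirror
  positions, even moments only see the sums and odd moments only the differences.
*)
theory Submission
  imports Defs
begin

section \<open>Amplitudes as sums over lattice paths\<close>

(* The amplitude after l steps to the left and r steps to the right, indexed by step counts
   instead of time and position. *)
fun lr_amp :: "complex \<Rightarrow> complex \<Rightarrow> complex \<Rightarrow> complex \<Rightarrow> complex \<Rightarrow> complex
    \<Rightarrow> nat \<Rightarrow> nat \<Rightarrow> complex \<times> complex" where
  "lr_amp a b c d \<alpha> \<beta> 0 0 = (\<alpha>, \<beta>)"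
| "lr_amp a b c d \<alpha> \<beta> (Suc l) 0 =
     (a * fst (lr_amp a b c d \<alpha> \<beta> l 0) + b * snd (lr_amp a b c d \<alpha> \<beta> l 0), 0)"
| "lr_amp a b c d \<alpha> \<beta> 0 (Suc r) =
     (0, c * fst (lr_amp a b c d \<alpha> \<beta> 0 r) + d * snd (lr_amp a b c d \<alpha> \<beta> 0 r))"
| "lr_amp a b c d \<alpha> \<beta> (Suc l) (Suc r) =
     (a * fst (lr_amp a b c d \<alpha> \<beta> l (Suc r)) + b * snd (lr_amp a b c d \<alpha> \<beta> l (Suc r)),
      c * fst (lr_amp a b c d \<alpha> \<beta> (Suc l) r) + d * snd (lr_amp a b c d \<alpha> \<beta> (Suc l) r))"

lemma qw_amp_Suc:
  "qw_amp a b c d \<alpha> \<beta> (Suc n) k =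
     (a * fst (qw_amp a b c d \<alpha> \<beta> n (k + 1)) + b * snd (qw_amp a b c d \<alpha> \<beta> n (k + 1)),
      c * fst (qw_amp a b c d \<alpha> \<beta> n (k - 1)) + d * snd (qw_amp a b c d \<alpha> \<beta> n (k - 1)))"
  by (simp add: split_beta)

lemma qw_amp_support:
  assumes "qw_amp a b c d \<alpha> \<beta> n k \<noteq> (0, 0)"
  shows "\<bar>k\<bar> \<le> int n \<and> even (int n - k)"
  using assms
proof (induction n arbitrary: k)
  case 0
  then show ?case by (auto split: if_splits)
next
  case (Suc n)
  then have "qw_amp a b c d \<alpha> \<beta> n (k + 1) \<noteq> (0, 0) \<or> qw_amp a b c d \<alpha> \<beta> n (k - 1) \<noteq> (0, 0)"
    by (auto simp: qw_amp_Suc)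
  then show ?case
    using Suc.IH by fastforce
qed

lemma qw_amp_outside_cone:
  "\<bar>k\<bar> > int n \<Longrightarrow> qw_amp a b c d \<alpha> \<beta> n k = (0, 0)"
  using qw_amp_support by fastforce

lemma qw_amp_eq_lr_amp:
  "qw_amp a b c d \<alpha> \<beta> (l + r) (int r - int l) = lr_amp a b c d \<alpha> \<beta> l r"
proof (induction l r rule: lr_amp.induct)
  case (2 a b c d \<alpha> \<beta> l)
  then show ?case
    using qw_amp_outside_cone[of l "- int l - 2" a b c d \<alpha> \<beta>]
    by (simp add: qw_amp_Suc split_beta algebra_simps)
next
  case (3 a b c d \<alpha> \<beta> r)
  then show ?case
    using qw_amp_outside_cone[of r "int r + 2" a b c d \<alpha> \<beta>]
    by (simp add: qw_amp_Suc split_beta algebra_simps)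
next
  case (4 a b c d \<alpha> \<beta> l r)
  then show ?case
    by (simp add: qw_amp_Suc split_beta algebra_simps)
qed simp

lemma qw_prob_eq_lr_amp:
  assumes "l \<le> n"
  shows "qw_prob a b c d \<alpha> \<beta> n (int n - 2 * int l) =
    (cmod (fst (lr_amp a b c d \<alpha> \<beta> l (n - l))))\<^sup>2 + (cmod (snd (lr_amp a b c d \<alpha> \<beta> l (n - l))))\<^sup>2"
proof -
  have "int n - 2 * int l = int (n - l) - int l" and "n = l + (n - l)"
    using assms by auto
  then show ?thesis
    unfolding qw_prob_def by (metis qw_amp_eq_lr_amp)
qed

lemma qw_moment_eq_sum:
  "qw_moment a b c d \<alpha> \<beta> n m =
     (\<Sum>l\<le>n. (real n - 2 * real l) ^ m * qw_prob a b c d \<alpha> \<beta> n (int n - 2 * int l))"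
proof -
  define g where "g k = real_of_int k ^ m * qw_prob a b c d \<alpha> \<beta> n k" for k
  define pos where "pos l = int n - 2 * int l" for l
  have "g k = 0" if "k \<notin> pos ` {..n}" for k
  proof (rule ccontr)
    assume "g k \<noteq> 0"
    then have "\<bar>k\<bar> \<le> int n \<and> even (int n - k)"
      by (intro qw_amp_support[of a b c d \<alpha> \<beta>]) (auto simp: g_def qw_prob_def)
    then have "k = pos (nat ((int n - k) div 2))" and "nat ((int n - k) div 2) \<le> n"
      unfolding pos_def by auto
    with that show False by blast
  qed
  then have "qw_moment a b c d \<alpha> \<beta> n m = sum g (pos ` {..n})"
    unfolding qw_moment_def g_def[symmetric] by (subst infsum_cong_neutral[of "pos ` {..n}"]) auto
  also have "\<dots> = (\<Sum>l\<le>n. g (pos l))"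
    by (subst sum.reindex) (auto simp: pos_def inj_on_def)
  finally show ?thesis
    by (simp add: g_def pos_def)
qed

lemma sum_atMost_reflect_pairs:
  fixes g :: "nat \<Rightarrow> 'a::comm_monoid_add"
  assumes "n \<ge> 1" and "even n \<Longrightarrow> g (n div 2) = 0"
  shows "(\<Sum>l\<le>n. g l) = (\<Sum>k\<le>(n - 1) div 2. g k + g (n - k))"
proof -
  define h where "h = (n - 1) div 2"
  define M where "M = {l. 2 * l = n}"
  have decomp: "{..n} = {..h} \<union> ((\<lambda>k. n - k) ` {..h} \<union> M)"
  proof (intro equalityI subsetI)
    fix l assume "l \<in> {..n}"
    then have "l \<le> h \<or> (n - l \<le> h \<and> l = n - (n - l)) \<or> 2 * l = n"
      unfolding h_def by auto
    then show "l \<in> {..h} \<union> ((\<lambda>k. n - k) ` {..h} \<union> M)"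
      unfolding M_def by blast
  qed (auto simp: M_def h_def)
  have M: "M = (if even n then {n div 2} else {})"
    by (auto simp: M_def)
  have "{..h} \<inter> ((\<lambda>k. n - k) ` {..h} \<union> M) = {}" and "(\<lambda>k. n - k) ` {..h} \<inter> M = {}"
    using assms(1) by (auto simp: M_def h_def)
  then have "sum g {..n} = sum g {..h} + (sum g ((\<lambda>k. n - k) ` {..h}) + sum g M)"
    unfolding decomp by (simp add: sum.union_disjoint M)
  also have "sum g M = 0"
    using assms(2) by (simp add: M)
  also have "sum g ((\<lambda>k. n - k) ` {..h}) = (\<Sum>k\<le>h. g (n - k))"
    by (subst sum.reindex) (auto simp: inj_on_def h_def)
  finally show ?thesis
    by (simp only: h_def sum.distrib add_0_right)
qed

lemma qw_moment_eq_pair_sum: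
  fixes a b c d \<alpha> \<beta> :: complex and n m :: nat
  assumes "n \<ge> 1" and "m \<ge> 1"
  defines "P l \<equiv> qw_prob a b c d \<alpha> \<beta> n (int n - 2 * int l)"
  shows "qw_moment a b c d \<alpha> \<beta> n m =
      real n ^ m * (qw_prob a b c d \<alpha> \<beta> n (int n) + (-1) ^ m * qw_prob a b c d \<alpha> \<beta> n (- int n))
    + (\<Sum>k=1..(n - 1) div 2. (real n - 2 * real k) ^ m * (P k + (-1) ^ m * P (n - k)))"
proof -
  have "qw_moment a b c d \<alpha> \<beta> n m = (\<Sum>k\<le>(n - 1) div 2.
      (real n - 2 * real k) ^ m * P k + (real n - 2 * real (n - k)) ^ m * P (n - k))"
    unfolding qw_moment_eq_sum P_def
  proof (rule sum_atMost_reflect_pairs)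
    assume "even n"
    then have "real n - 2 * real (n div 2) = 0"
      by (metis diff_self dvd_mult_div_cancel of_nat_mult of_nat_numeral)
    then show "(real n - 2 * real (n div 2)) ^ m
        * qw_prob a b c d \<alpha> \<beta> n (int n - 2 * int (n div 2)) = 0"
      using assms(2) by simp
  qed (use assms(1) in simp)
  also have "\<dots> = (\<Sum>k\<le>(n - 1) div 2. (real n - 2 * real k) ^ m * (P k + (-1) ^ m * P (n - k)))"
  proof (intro sum.cong refl)
    fix k assume "k \<in> {..(n - 1) div 2}"
    then have reflected: "real n - 2 * real (n - k) = - (real n - 2 * real k)"
      by (simp add: of_nat_diff)
    have "(real n - 2 * real (n - k)) ^ m = (-1) ^ m * (real n - 2 * real k) ^ m"
      unfolding reflected by (rule power_minus)
    then show "(real n - 2 * real k) ^ m * P k + (real n - 2 * real (n - k)) ^ m * P (n - k) =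
        (real n - 2 * real k) ^ m * (P k + (-1) ^ m * P (n - k))"
      by (simp add: distrib_left)
  qed
  also have "\<dots> = real n ^ m * (P 0 + (-1) ^ m * P n)
    + (\<Sum>k=1..(n - 1) div 2. (real n - 2 * real k) ^ m * (P k + (-1) ^ m * P (n - k)))"
    unfolding atMost_atLeast0 by (subst sum.atLeast_Suc_atMost) simp_all
  also have "P 0 = qw_prob a b c d \<alpha> \<beta> n (int n)"
    unfolding P_def by simp
  also have "P n = qw_prob a b c d \<alpha> \<beta> n (- int n)"
    unfolding P_def by simp
  finally show ?thesis .
qed

section \<open>Binomial sums\<close>

lemma inner_index_SucE:
  assumes "1 \<le> k" and "k < n"
  obtains p q where "k = Suc p" and "n - k = Suc q"
  using assms by (metis Suc_diff_1 less_imp_Suc_add zero_less_diff le_less_trans less_one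
      not_less_zero nat_less_le)

definition binom_sum :: "'a::comm_ring_1 \<Rightarrow> nat \<Rightarrow> nat \<Rightarrow> 'a" where
  "binom_sum z p q = (\<Sum>i\<le>p + q. of_nat ((p choose i) * (q choose i)) * z ^ i)"

definition binom_sum_shift :: "'a::comm_ring_1 \<Rightarrow> nat \<Rightarrow> nat \<Rightarrow> 'a" where
  "binom_sum_shift z p q = (\<Sum>i\<le>p + q. of_nat ((p choose Suc i) * (q choose i)) * z ^ Suc i)"

lemma binom_sum_commute: "binom_sum z p q = binom_sum z q p"
  unfolding binom_sum_def by (simp add: add.commute mult.commute)

lemma binom_sum_0_left [simp]: "binom_sum z 0 q = 1"
  unfolding binom_sum_def by (simp add: atMost_atLeast0 sum.atLeast_Suc_atMost binomial_eq_0)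

lemma binom_sum_shift_0_left [simp]: "binom_sum_shift z 0 q = 0"
  unfolding binom_sum_shift_def by simp

lemma binom_sum_extend:
  "binom_sum z p q = (\<Sum>i\<le>Suc (p + q). of_nat ((p choose i) * (q choose i)) * z ^ i)"
  unfolding binom_sum_def by (simp add: binomial_eq_0)

lemma binom_sum_shift_Suc_left:
  "binom_sum_shift z (Suc p) q = binom_sum_shift z p q + z * binom_sum z p q"
proof -
  have "binom_sum_shift z (Suc p) q =
      (\<Sum>i\<le>Suc (p + q). of_nat ((p choose Suc i) * (q choose i)) * z ^ Suc i)
      + (\<Sum>i\<le>Suc (p + q). of_nat ((p choose i) * (q choose i)) * z ^ Suc i)"
    unfolding binom_sum_shift_def by (simp add: algebra_simps sum.distrib)
  also have "\<dots> = binom_sum_shift z p q + z * binom_sum z p q"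
    unfolding binom_sum_shift_def binom_sum_extend
    by (simp add: binomial_eq_0 sum_distrib_left algebra_simps)
  finally show ?thesis .
qed

lemma binom_sum_Suc_left:
  "binom_sum z (Suc p) q = binom_sum z p q + binom_sum_shift z q p"
proof -
  have "binom_sum z (Suc p) q =
      1 + (\<Sum>i\<le>p + q. of_nat ((Suc p choose Suc i) * (q choose Suc i)) * z ^ Suc i)"
    unfolding binom_sum_def by (simp add: sum.atMost_Suc_shift del: sum.atMost_Suc)
  also have "\<dots> = (1 + (\<Sum>i\<le>p + q. of_nat ((p choose Suc i) * (q choose Suc i)) * z ^ Suc i))
      + (\<Sum>i\<le>p + q. of_nat ((p choose i) * (q choose Suc i)) * z ^ Suc i)"
    by (simp add: algebra_simps sum.distrib)
  also have "1 + (\<Sum>i\<le>p + q. of_nat ((p choose Suc i) * (q choose Suc i)) * z ^ Suc i)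
      = binom_sum z p q"
    unfolding binom_sum_extend by (simp add: sum.atMost_Suc_shift del: sum.atMost_Suc)
  also have "(\<Sum>i\<le>p + q. of_nat ((p choose i) * (q choose Suc i)) * z ^ Suc i)
      = binom_sum_shift z q p"
    unfolding binom_sum_shift_def by (simp add: add.commute mult.commute)
  finally show ?thesis .
qed

lemma binom_sum_of_real:
  "binom_sum (of_real r) p q = (of_real (binom_sum r p q) :: 'a::{real_algebra_1,comm_ring_1})"
  by (simp add: binom_sum_def)

lemma binom_sum_shift_of_real:
  "binom_sum_shift (of_real r) p q
    = (of_real (binom_sum_shift r p q) :: 'a::{real_algebra_1,comm_ring_1})"
  by (simp add: binom_sum_shift_def)

definition binom_sum_antideriv :: "'a::field_char_0 \<Rightarrow> nat \<Rightarrow> nat \<Rightarrow> 'a" where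
  "binom_sum_antideriv z p q =
     (\<Sum>i\<le>p + q. of_nat ((p choose i) * (q choose i)) * z ^ Suc i / of_nat (Suc i))"

lemma binom_sum_antideriv_commute: "binom_sum_antideriv z p q = binom_sum_antideriv z q p"
  unfolding binom_sum_antideriv_def
  by (simp only: add.commute[of p q] mult.commute[of "p choose _"])

lemma Suc_mult_binom_sum_antideriv:
  "of_nat (Suc p) * binom_sum_antideriv z p q = binom_sum_shift z p q + z * binom_sum z p q"
proof -
  have "of_nat (Suc p) * (of_nat ((p choose i) * (q choose i)) * z ^ Suc i / of_nat (Suc i))
      = of_nat ((p choose Suc i) * (q choose i)) * z ^ Suc i
        + z * (of_nat ((p choose i) * (q choose i)) * z ^ i)"
    for i :: nat
  proof -
    have "Suc p * (p choose i) = ((p choose Suc i) + (p choose i)) * Suc i"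
      using Suc_times_binomial_eq[of p i] by simp
    then have binom: "of_nat (Suc p) * of_nat (p choose i)
        = (of_nat (p choose Suc i) + of_nat (p choose i)) * (of_nat (Suc i) :: 'a)"
      by (metis of_nat_add of_nat_mult)
    have "of_nat (Suc p) * (of_nat ((p choose i) * (q choose i)) * z ^ Suc i / of_nat (Suc i))
        = of_nat (Suc p) * of_nat (p choose i) * (of_nat (q choose i) * z ^ Suc i)
          / (of_nat (Suc i) :: 'a)"
      by (simp only: of_nat_mult mult_ac times_divide_eq_right)
    also have "\<dots>
        = (of_nat (p choose Suc i) + of_nat (p choose i)) * (of_nat (q choose i) * z ^ Suc i)"
      unfolding binom by (simp del: of_nat_Suc)
    finally show ?thesis
      by (simp add: algebra_simps)
  qed
  then show ?thesis
    unfolding binom_sum_antideriv_def binom_sum_shift_def binom_sum_def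
    by (simp add: sum_distrib_left sum.distrib)
qed

lemma sum_shift_index_atMost:
  fixes f :: "nat \<Rightarrow> 'a::comm_monoid_add"
  assumes "\<And>i. i > p \<Longrightarrow> f i = 0"
  shows "(\<Sum>\<gamma>=1..Suc p. f (\<gamma> - 1)) = (\<Sum>i\<le>p + q. f i)"
proof -
  have "(\<Sum>\<gamma>=1..Suc p. f (\<gamma> - 1)) = (\<Sum>i\<le>p. f i)"
    by (simp add: sum.shift_bounds_cl_Suc_ivl atMost_atLeast0 del: sum.cl_ivl_Suc)
  also have "\<dots> = (\<Sum>i\<le>p + q. f i)"
    by (rule sum.mono_neutral_left) (auto simp: assms)
  finally show ?thesis .
qed

lemma sum_binom_weights:
  "(\<Sum>\<gamma>=1..Suc p. z ^ \<gamma> * of_nat (p choose (\<gamma> - 1)) * of_nat (q choose (\<gamma> - 1)))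
    = (z :: 'a::comm_ring_1) * binom_sum z p q"
proof -
  have "(\<Sum>\<gamma>=1..Suc p. z ^ \<gamma> * of_nat (p choose (\<gamma> - 1)) * of_nat (q choose (\<gamma> - 1)))
      = (\<Sum>\<gamma>=1..Suc p. z ^ Suc (\<gamma> - 1) * of_nat (p choose (\<gamma> - 1)) * of_nat (q choose (\<gamma> - 1)))"
    by (rule sum.cong) auto
  also have "\<dots> = (\<Sum>i\<le>p + q. z ^ Suc i * of_nat (p choose i) * of_nat (q choose i))"
    by (rule sum_shift_index_atMost) (simp add: binomial_eq_0)
  finally show ?thesis
    unfolding binom_sum_def by (simp add: sum_distrib_left algebra_simps)
qed

lemma sum_binom_weights_div:
  "(\<Sum>\<gamma>=1..Suc p. z ^ \<gamma> * of_nat (p choose (\<gamma> - 1)) * of_nat (q choose (\<gamma> - 1)) / of_nat \<gamma>)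
    = (binom_sum_antideriv z p q :: 'a::field_char_0)"
proof -
  have "(\<Sum>\<gamma>=1..Suc p. z ^ \<gamma> * of_nat (p choose (\<gamma> - 1)) * of_nat (q choose (\<gamma> - 1)) / of_nat \<gamma>)
      = (\<Sum>\<gamma>=1..Suc p. z ^ Suc (\<gamma> - 1) * of_nat (p choose (\<gamma> - 1)) * of_nat (q choose (\<gamma> - 1))
          / of_nat (Suc (\<gamma> - 1)))"
    by (rule sum.cong) auto
  also have "\<dots> = (\<Sum>i\<le>p + q. z ^ Suc i * of_nat (p choose i) * of_nat (q choose i) / of_nat (Suc i))"
    by (rule sum_shift_index_atMost) (simp add: binomial_eq_0)
  finally show ?thesis
    by (simp add: binom_sum_antideriv_def mult_ac)
qed

lemma binom_sums_via_weights:
  fixes z :: "'a::field_char_0" and k n :: nat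
  assumes "1 \<le> k" and "k < n"
  defines "w \<equiv> \<lambda>\<gamma>. z ^ \<gamma> * of_nat ((k - 1) choose (\<gamma> - 1)) * of_nat ((n - k - 1) choose (\<gamma> - 1))"
  defines "\<sigma>\<^sub>0 \<equiv> \<Sum>\<gamma>=1..k. w \<gamma>" and "\<sigma>\<^sub>1 \<equiv> \<Sum>\<gamma>=1..k. w \<gamma> / of_nat \<gamma>"
  shows "z * binom_sum z (k - 1) (n - k - 1) = \<sigma>\<^sub>0"
    and "binom_sum_shift z (k - 1) (n - k - 1) = of_nat k * \<sigma>\<^sub>1 - \<sigma>\<^sub>0"
    and "binom_sum_shift z (n - k - 1) (k - 1) = (of_nat n - of_nat k) * \<sigma>\<^sub>1 - \<sigma>\<^sub>0"
proof -
  obtain p q where k: "k = Suc p" and nk: "n - k = Suc q"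
    using assms(1,2) by (rule inner_index_SucE)
  then have idx: "k - 1 = p" "n - k - 1 = q"
    by auto
  have nk': "of_nat n - of_nat k = (of_nat (Suc q) :: 'a)"
    by (metis assms(2) less_imp_le nk of_nat_diff)
  have \<sigma>\<^sub>0: "\<sigma>\<^sub>0 = z * binom_sum z p q"
    unfolding \<sigma>\<^sub>0_def w_def idx unfolding k by (rule sum_binom_weights)
  have \<sigma>\<^sub>1: "\<sigma>\<^sub>1 = binom_sum_antideriv z p q"
    unfolding \<sigma>\<^sub>1_def w_def idx unfolding k by (rule sum_binom_weights_div)
  show "z * binom_sum z (k - 1) (n - k - 1) = \<sigma>\<^sub>0"
    unfolding idx \<sigma>\<^sub>0 ..
  show "binom_sum_shift z (k - 1) (n - k - 1) = of_nat k * \<sigma>\<^sub>1 - \<sigma>\<^sub>0"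
    unfolding idx \<sigma>\<^sub>0 \<sigma>\<^sub>1 unfolding k Suc_mult_binom_sum_antideriv by simp
  show "binom_sum_shift z (n - k - 1) (k - 1) = (of_nat n - of_nat k) * \<sigma>\<^sub>1 - \<sigma>\<^sub>0"
    unfolding idx \<sigma>\<^sub>0 \<sigma>\<^sub>1 nk' binom_sum_antideriv_commute[of z p] Suc_mult_binom_sum_antideriv
      binom_sum_commute[of z q]
    by simp
qed

lemma sum_sum_weighted_quadratic:
  fixes w :: "nat \<Rightarrow> real"
  assumes "0 \<notin> I"
  shows "(\<Sum>\<gamma>\<in>I. \<Sum>\<delta>\<in>I. w \<gamma> * w \<delta> / (real \<gamma> * real \<delta>)
            * (c\<^sub>0 + c\<^sub>1 * (real \<gamma> + real \<delta>) + c\<^sub>2 * (real \<gamma> * real \<delta>)))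
    = c\<^sub>0 * (\<Sum>\<gamma>\<in>I. w \<gamma> / real \<gamma>)\<^sup>2 + 2 * c\<^sub>1 * (\<Sum>\<gamma>\<in>I. w \<gamma> / real \<gamma>) * (\<Sum>\<gamma>\<in>I. w \<gamma>)
      + c\<^sub>2 * (\<Sum>\<gamma>\<in>I. w \<gamma>)\<^sup>2"
proof -
  define u where "u \<gamma> = w \<gamma> / real \<gamma>" for \<gamma>
  have "(\<Sum>\<gamma>\<in>I. \<Sum>\<delta>\<in>I. w \<gamma> * w \<delta> / (real \<gamma> * real \<delta>)
            * (c\<^sub>0 + c\<^sub>1 * (real \<gamma> + real \<delta>) + c\<^sub>2 * (real \<gamma> * real \<delta>)))
      = (\<Sum>\<gamma>\<in>I. \<Sum>\<delta>\<in>I. c\<^sub>0 * (u \<gamma> * u \<delta>) + c\<^sub>1 * (u \<gamma> * w \<delta>) + c\<^sub>1 * (w \<gamma> * u \<delta>)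
          + c\<^sub>2 * (w \<gamma> * w \<delta>))"
  proof (intro sum.cong refl)
    fix \<gamma> \<delta> assume "\<gamma> \<in> I" and "\<delta> \<in> I"
    with assms have "real \<gamma> \<noteq> 0" and "real \<delta> \<noteq> 0"
      by (metis of_nat_eq_0_iff)+
    then show "w \<gamma> * w \<delta> / (real \<gamma> * real \<delta>)
            * (c\<^sub>0 + c\<^sub>1 * (real \<gamma> + real \<delta>) + c\<^sub>2 * (real \<gamma> * real \<delta>))
      = c\<^sub>0 * (u \<gamma> * u \<delta>) + c\<^sub>1 * (u \<gamma> * w \<delta>) + c\<^sub>1 * (w \<gamma> * u \<delta>) + c\<^sub>2 * (w \<gamma> * w \<delta>)"
      by (simp add: u_def field_simps)
  qed
  also have "\<dots> = c\<^sub>0 * (sum u I * sum u I) + c\<^sub>1 * (sum u I * sum w I) + c\<^sub>1 * (sum w I * sum u I)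
      + c\<^sub>2 * (sum w I * sum w I)"
    unfolding sum_product by (simp only: sum.distrib sum_distrib_left)
  finally show ?thesis
    unfolding u_def by (simp add: power2_eq_square algebra_simps)
qed

lemma sum_sum_binom_weights:
  fixes n k :: nat and z y c\<^sub>0 c\<^sub>1 c\<^sub>2 :: real
  defines "w \<equiv> \<lambda>\<gamma>. z ^ \<gamma> * real ((k - 1) choose (\<gamma> - 1)) * real ((n - k - 1) choose (\<gamma> - 1))"
  shows "(\<Sum>\<gamma>=1..k. \<Sum>\<delta>=1..k. z ^ (\<gamma> + \<delta>)
        * real ((k - 1) choose (\<gamma> - 1)) * real ((k - 1) choose (\<delta> - 1))
        * real ((n - k - 1) choose (\<gamma> - 1)) * real ((n - k - 1) choose (\<delta> - 1))
        * y / (real \<gamma> * real \<delta>) * (c\<^sub>0 + c\<^sub>1 * (real \<gamma> + real \<delta>) + c\<^sub>2 * (real \<gamma> * real \<delta>)))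
    = y * (c\<^sub>0 * (\<Sum>\<gamma>=1..k. w \<gamma> / real \<gamma>)\<^sup>2
        + 2 * c\<^sub>1 * (\<Sum>\<gamma>=1..k. w \<gamma> / real \<gamma>) * (\<Sum>\<gamma>=1..k. w \<gamma>) + c\<^sub>2 * (\<Sum>\<gamma>=1..k. w \<gamma>)\<^sup>2)"
proof -
  have "(\<Sum>\<gamma>=1..k. \<Sum>\<delta>=1..k. z ^ (\<gamma> + \<delta>)
        * real ((k - 1) choose (\<gamma> - 1)) * real ((k - 1) choose (\<delta> - 1))
        * real ((n - k - 1) choose (\<gamma> - 1)) * real ((n - k - 1) choose (\<delta> - 1))
        * y / (real \<gamma> * real \<delta>) * (c\<^sub>0 + c\<^sub>1 * (real \<gamma> + real \<delta>) + c\<^sub>2 * (real \<gamma> * real \<delta>)))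
      = y * (\<Sum>\<gamma>=1..k. \<Sum>\<delta>=1..k. w \<gamma> * w \<delta> / (real \<gamma> * real \<delta>)
        * (c\<^sub>0 + c\<^sub>1 * (real \<gamma> + real \<delta>) + c\<^sub>2 * (real \<gamma> * real \<delta>)))"
    unfolding sum_distrib_left w_def by (intro sum.cong refl) (simp add: power_add ac_simps)
  also have "\<dots> = y * (c\<^sub>0 * (\<Sum>\<gamma>=1..k. w \<gamma> / real \<gamma>)\<^sup>2
      + 2 * c\<^sub>1 * (\<Sum>\<gamma>=1..k. w \<gamma> / real \<gamma>) * (\<Sum>\<gamma>=1..k. w \<gamma>) + c\<^sub>2 * (\<Sum>\<gamma>=1..k. w \<gamma>)\<^sup>2)"
    by (subst sum_sum_weighted_quadratic) auto
  finally show ?thesis .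
qed

section \<open>Closed form of the amplitudes\<close>

lemma lr_amp_0_right: "lr_amp a b c d \<alpha> \<beta> (Suc l) 0 = (a ^ l * (a * \<alpha> + b * \<beta>), 0)"
  by (induction l) auto

lemma lr_amp_0_left: "lr_amp a b c d \<alpha> \<beta> 0 (Suc r) = (0, d ^ r * (c * \<alpha> + d * \<beta>))"
  by (induction r) auto

lemma lr_amp_closed_form:
  fixes z a b c d \<alpha> \<beta> :: complex
  assumes z: "a * d * z = b * c"
  defines "X \<equiv> a * \<alpha> + b * \<beta>" and "Y \<equiv> c * \<alpha> + d * \<beta>"
  shows "lr_amp a b c d \<alpha> \<beta> (Suc p) (Suc q) =
    (a ^ p * d ^ q * (d * X * binom_sum_shift z p q + b * Y * binom_sum z p q),
     a ^ p * d ^ q * (a * Y * binom_sum_shift z q p + c * X * binom_sum z p q))"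
proof (induction "p + q" arbitrary: p q)
  case 0
  then show ?case by (simp add: X_def Y_def)
next
  case (Suc N)
  have "fst (lr_amp a b c d \<alpha> \<beta> (Suc p) (Suc q)) =
      a ^ p * d ^ q * (d * X * binom_sum_shift z p q + b * Y * binom_sum z p q)"
  proof (cases p)
    case 0
    then show ?thesis by (simp add: lr_amp_0_left X_def Y_def del: lr_amp.simps(3))
  next
    case (Suc p')
    with Suc.hyps have "fst (lr_amp a b c d \<alpha> \<beta> (Suc p) (Suc q)) =
        a * (a ^ p' * d ^ q * (d * X * binom_sum_shift z p' q + b * Y * binom_sum z p' q))
        + b * (a ^ p' * d ^ q * (a * Y * binom_sum_shift z q p' + c * X * binom_sum z p' q))"
      by simp
    also have "\<dots> = a ^ p' * d ^ q * (a * d * X * (binom_sum_shift z p' q + z * binom_sum z p' q)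
        + a * b * Y * (binom_sum z p' q + binom_sum_shift z q p'))"
      by (simp add: z[symmetric] algebra_simps)
    also have "\<dots> = a ^ p * d ^ q * (d * X * binom_sum_shift z p q + b * Y * binom_sum z p q)"
      by (simp add: Suc binom_sum_shift_Suc_left binom_sum_Suc_left algebra_simps)
    finally show ?thesis .
  qed
  moreover have "snd (lr_amp a b c d \<alpha> \<beta> (Suc p) (Suc q)) =
      a ^ p * d ^ q * (a * Y * binom_sum_shift z q p + c * X * binom_sum z p q)"
  proof (cases q)
    case 0
    then show ?thesis
      by (simp add: lr_amp_0_right X_def Y_def binom_sum_commute[of z p] del: lr_amp.simps(2))
  next
    case (Suc q')
    with Suc.hyps have "snd (lr_amp a b c d \<alpha> \<beta> (Suc p) (Suc q)) =
        c * (a ^ p * d ^ q' * (d * X * binom_sum_shift z p q' + b * Y * binom_sum z p q'))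
        + d * (a ^ p * d ^ q' * (a * Y * binom_sum_shift z q' p + c * X * binom_sum z p q'))"
      by simp
    also have "\<dots> = a ^ p * d ^ q' * (a * d * Y * (binom_sum_shift z q' p + z * binom_sum z q' p)
        + c * d * X * (binom_sum z q' p + binom_sum_shift z p q'))"
      by (simp add: z[symmetric] algebra_simps binom_sum_commute[of z p q'])
    also have "\<dots> = a ^ p * d ^ q * (a * Y * binom_sum_shift z q p + c * X * binom_sum z p q)"
      by (simp add: Suc binom_sum_shift_Suc_left binom_sum_Suc_left algebra_simps
          binom_sum_commute[of z p])
    finally show ?thesis .
  qed
  ultimately show ?case
    by (simp add: prod_eq_iff)
qed

section \<open>Probabilities for a unitary coin\<close>

lemma cmod_add_square:
  fixes u v :: complex
  shows "(cmod (u + v))\<^sup>2 = (cmod u)\<^sup>2 + (cmod v)\<^sup>2 + 2 * Re (u * cnj v)"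
  unfolding cmod_power2 by (simp add: power2_eq_square algebra_simps)

lemma cmod_real_combination_square:
  fixes u v :: complex and t s :: real
  shows "(cmod (u * of_real t + v * of_real s))\<^sup>2
    = (cmod u)\<^sup>2 * t\<^sup>2 + (cmod v)\<^sup>2 * s\<^sup>2 + 2 * t * s * Re (u * cnj v)"
  by (simp add: cmod_add_square norm_mult power_mult_distrib algebra_simps)

lemma mult_cnj_add_cnj_mult: "u * cnj v + cnj u * v = complex_of_real (2 * Re (u * cnj v))"
  by (metis complex_add_cnj complex_cnj_cnj complex_cnj_mult mult.commute)

lemma Re_add_cnj_mult: "Re (u * cnj v + cnj u * v) = 2 * Re (u * cnj v)"
  by (simp only: mult_cnj_add_cnj_mult Re_complex_of_real)

lemma of_real_Re_add_cnj_mult: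
  "complex_of_real (Re (u * cnj v + cnj u * v)) = u * cnj v + cnj u * v"
  by (simp only: mult_cnj_add_cnj_mult Re_complex_of_real)

lemma cmod_add_mult_square:
  "(cmod (a * \<alpha> + b * \<beta>))\<^sup>2 = (cmod a)\<^sup>2 * (cmod \<alpha>)\<^sup>2 + (cmod b)\<^sup>2 * (cmod \<beta>)\<^sup>2
     + Re (a * \<alpha> * cnj (b * \<beta>) + cnj (a * \<alpha>) * b * \<beta>)"
  unfolding mult.assoc[of "cnj (a * \<alpha>)"] Re_add_cnj_mult
  by (simp only: cmod_add_square norm_mult power_mult_distrib)

lemma cmod_eq_1_if_mult_cnj:
  assumes "e * cnj e = 1"
  shows "cmod e = 1"
proof -
  have "complex_of_real ((cmod e)\<^sup>2) = 1"
    unfolding complex_norm_square by (rule assms)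
  then have "(cmod e)\<^sup>2 = 1"
    using of_real_eq_1_iff by blast
  then show ?thesis
    using norm_ge_zero[of e] by (auto simp: power2_eq_1_iff)
qed

(* Up to the factor |a|^(2(n-2)), F T T' and F T' T are the probabilities of the mirror
   positions n - 2k and 2k - n, by lr_prob_closed_form. *)
lemma mirror_prob_forms:
  fixes A B D R NX NY \<rho> S T T' \<sigma>\<^sub>0 \<sigma>\<^sub>1 k n :: real
  assumes AB: "A + B = 1" and B0: "B \<noteq> 0"
    and NX_add: "NX + NY = 1" and NX_diff: "NX - NY = (A - B) * D + 2 * R"
    and \<rho>: "\<rho> = (A - B) * R - 2 * A * B * D"
    and T: "T = k * \<sigma>\<^sub>1 - \<sigma>\<^sub>0" and T': "T' = (n - k) * \<sigma>\<^sub>1 - \<sigma>\<^sub>0" and S: "S = - (A / B) * \<sigma>\<^sub>0"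
  defines "F t t' \<equiv> A * NX * t\<^sup>2 + B * NY * S\<^sup>2 + A * NY * t'\<^sup>2 + B * NX * S\<^sup>2 + (t - t') * S * \<rho>"
  shows "F T T' + F T' T = A * (((n - k)\<^sup>2 + k\<^sup>2) * \<sigma>\<^sub>1\<^sup>2 - 2 * n * \<sigma>\<^sub>1 * \<sigma>\<^sub>0 + 2 / B * \<sigma>\<^sub>0\<^sup>2)"
    and "F T T' - F T' T = A * (n - 2 * k) *
      ((- n * (A - B) * D - 2 * n * R) * \<sigma>\<^sub>1\<^sup>2 + 2 * (R / B - D) * \<sigma>\<^sub>1 * \<sigma>\<^sub>0)"
proof -
  have A: "A = 1 - B" and NY: "NY = 1 - NX"
    using AB NX_add by simp_all
  have "F T T' + F T' T = A * (T\<^sup>2 + T'\<^sup>2) + 2 * B * S\<^sup>2"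
    unfolding F_def NY by (simp add: algebra_simps)
  also have "\<dots> = A * (((n - k)\<^sup>2 + k\<^sup>2) * \<sigma>\<^sub>1\<^sup>2 - 2 * n * \<sigma>\<^sub>1 * \<sigma>\<^sub>0 + 2 / B * \<sigma>\<^sub>0\<^sup>2)"
    unfolding T T' S A using B0 by (simp add: field_simps power2_eq_square)
  finally show "F T T' + F T' T = A * (((n - k)\<^sup>2 + k\<^sup>2) * \<sigma>\<^sub>1\<^sup>2 - 2 * n * \<sigma>\<^sub>1 * \<sigma>\<^sub>0 + 2 / B * \<sigma>\<^sub>0\<^sup>2)" .
  have "F T T' - F T' T = (T - T') * (A * (NX - NY) * (T + T') + 2 * S * \<rho>)"
    unfolding F_def by (simp add: algebra_simps power2_eq_square)
  also have "\<dots> = A * (n - 2 * k) *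
      (- n * (NX - NY) * \<sigma>\<^sub>1\<^sup>2 + 2 * (NX - NY + \<rho> / B) * \<sigma>\<^sub>1 * \<sigma>\<^sub>0)"
    unfolding T T' S using B0 by (simp add: field_simps power2_eq_square)
  also have "NX - NY + \<rho> / B = R / B - D"
    unfolding NX_diff \<rho> A using B0 by (simp add: field_simps)
  finally show "F T T' - F T' T = A * (n - 2 * k) *
      ((- n * (A - B) * D - 2 * n * R) * \<sigma>\<^sub>1\<^sup>2 + 2 * (R / B - D) * \<sigma>\<^sub>1 * \<sigma>\<^sub>0)"
    unfolding NX_diff by (simp add: algebra_simps)
qed

context
  fixes a b c d :: complex
  assumes unitary: "unitary2 a b c d" and nonzero: "a * b * c * d \<noteq> 0"
begin

lemma unitary2_first_row: "a * cnj a + b * cnj b = 1"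
  using unitary unfolding unitary2_def by simp

lemma unitary2_cmod_first_row: "(cmod a)\<^sup>2 + (cmod b)\<^sup>2 = 1"
proof -
  have "complex_of_real ((cmod a)\<^sup>2 + (cmod b)\<^sup>2) = 1"
    unfolding of_real_add complex_norm_square by (rule unitary2_first_row)
  then show ?thesis
    using of_real_eq_1_iff by blast
qed

lemma unitary2_d_mult_cnj_d: "d * cnj d = a * cnj a"
proof -
  have "cnj b * b + cnj d * d = 1"
    using unitary unfolding unitary2_def by simp
  with unitary2_first_row show ?thesis
    by algebra
qed

lemma unitary2_cmod_d: "cmod d = cmod a"
proof -
  have "complex_of_real ((cmod d)\<^sup>2) = complex_of_real ((cmod a)\<^sup>2)"
    unfolding complex_norm_square by (rule unitary2_d_mult_cnj_d)
  then have "(cmod d)\<^sup>2 = (cmod a)\<^sup>2"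
    using of_real_eq_iff by blast
  then show ?thesis
    by (simp add: power2_eq_iff_nonneg)
qed

lemma unitary2_second_row:
  obtains e where "d = e * cnj a" and "c = - e * cnj b" and "e * cnj e = 1"
proof
  have a0: "a \<noteq> 0"
    using nonzero by auto
  have "cnj (a * cnj c + b * cnj d) = 0"
    using unitary unfolding unitary2_def by simp
  then have "cnj a * c + cnj b * d = 0"
    by simp
  then have "c * cnj a = - (d * cnj b)"
    by algebra
  with a0 show "c = - (d / cnj a) * cnj b"
    by (simp add: field_simps)
  from a0 show "d = d / cnj a * cnj a"
    by simp
  from a0 show "d / cnj a * cnj (d / cnj a) = 1"
    using unitary2_d_mult_cnj_d by (simp add: field_simps)
qed

lemma unitary2_cmod_c: "cmod c = cmod b"
proof -
  obtain e where "c = - e * cnj b" and "e * cnj e = 1"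
    using unitary2_second_row .
  then show ?thesis
    by (simp add: norm_mult cmod_eq_1_if_mult_cnj)
qed

lemma unitary2_cmod_snd_square:
  "(cmod (c * \<alpha> + d * \<beta>))\<^sup>2 = (cmod b)\<^sup>2 * (cmod \<alpha>)\<^sup>2 + (cmod a)\<^sup>2 * (cmod \<beta>)\<^sup>2
     - Re (a * \<alpha> * cnj (b * \<beta>) + cnj (a * \<alpha>) * b * \<beta>)"
proof -
  obtain e where d: "d = e * cnj a" and c: "c = - e * cnj b" and e: "e * cnj e = 1"
    using unitary2_second_row .
  have "complex_of_real ((cmod (c * \<alpha> + d * \<beta>))\<^sup>2) = complex_of_real ((cmod b)\<^sup>2 * (cmod \<alpha>)\<^sup>2
      + (cmod a)\<^sup>2 * (cmod \<beta>)\<^sup>2 - Re (a * \<alpha> * cnj (b * \<beta>) + cnj (a * \<alpha>) * (b * \<beta>)))"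
    unfolding of_real_add of_real_diff of_real_mult complex_norm_square of_real_Re_add_cnj_mult
    unfolding c d complex_cnj_add complex_cnj_mult complex_cnj_minus complex_cnj_cnj
    using e by algebra
  then show ?thesis
    by (simp only: of_real_eq_iff mult.assoc)
qed

lemma unitary2_interference_conj: "a * y * cnj (c * x) = - cnj (d * x * cnj (b * y))"
proof -
  obtain e where d: "d = e * cnj a" and c: "c = - e * cnj b"
    using unitary2_second_row .
  show ?thesis
    unfolding c d by (simp add: algebra_simps)
qed

lemma unitary2_interference_Re:
  "2 * Re (d * (a * \<alpha> + b * \<beta>) * cnj (b * (c * \<alpha> + d * \<beta>)))
    = ((cmod a)\<^sup>2 - (cmod b)\<^sup>2) * Re (a * \<alpha> * cnj (b * \<beta>) + cnj (a * \<alpha>) * b * \<beta>)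
      - 2 * (cmod a)\<^sup>2 * (cmod b)\<^sup>2 * ((cmod \<alpha>)\<^sup>2 - (cmod \<beta>)\<^sup>2)"
proof -
  obtain e where d: "d = e * cnj a" and c: "c = - e * cnj b" and e: "e * cnj e = 1"
    using unitary2_second_row .
  have "complex_of_real (2 * Re (d * (a * \<alpha> + b * \<beta>) * cnj (b * (c * \<alpha> + d * \<beta>))))
    = complex_of_real (((cmod a)\<^sup>2 - (cmod b)\<^sup>2) * Re (a * \<alpha> * cnj (b * \<beta>) + cnj (a * \<alpha>) * (b * \<beta>))
      - 2 * (cmod a)\<^sup>2 * (cmod b)\<^sup>2 * ((cmod \<alpha>)\<^sup>2 - (cmod \<beta>)\<^sup>2))"
    unfolding complex_add_cnj[symmetric]
    unfolding of_real_diff of_real_mult complex_norm_square of_real_Re_add_cnj_mult of_real_numeral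
    unfolding c d complex_cnj_add complex_cnj_mult complex_cnj_minus complex_cnj_cnj
    using e by algebra
  then show ?thesis
    by (simp only: of_real_eq_iff mult.assoc)
qed

lemma lr_prob_closed_form:
  fixes \<alpha> \<beta> :: complex and p q :: nat
  defines "A \<equiv> (cmod a)\<^sup>2" and "B \<equiv> (cmod b)\<^sup>2"
    and "X \<equiv> a * \<alpha> + b * \<beta>" and "Y \<equiv> c * \<alpha> + d * \<beta>"
  defines "S \<equiv> binom_sum (- B / A) p q"
    and "T \<equiv> binom_sum_shift (- B / A) p q" and "T' \<equiv> binom_sum_shift (- B / A) q p"
    and "\<rho> \<equiv> 2 * Re (d * X * cnj (b * Y))"
  shows "(cmod (fst (lr_amp a b c d \<alpha> \<beta> (Suc p) (Suc q))))\<^sup>2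
      + (cmod (snd (lr_amp a b c d \<alpha> \<beta> (Suc p) (Suc q))))\<^sup>2
    = A ^ (p + q) * (A * (cmod X)\<^sup>2 * T\<^sup>2 + B * (cmod Y)\<^sup>2 * S\<^sup>2
        + A * (cmod Y)\<^sup>2 * T'\<^sup>2 + B * (cmod X)\<^sup>2 * S\<^sup>2 + (T - T') * S * \<rho>)"
proof -
  obtain e where d: "d = e * cnj a" and c: "c = - e * cnj b"
    using unitary2_second_row .
  have "a \<noteq> 0"
    using nonzero by auto
  moreover have "complex_of_real A = a * cnj a" and "complex_of_real B = b * cnj b"
    unfolding A_def B_def complex_norm_square by simp_all
  ultimately have "a * d * complex_of_real (- B / A) = b * c"
    unfolding of_real_minus of_real_divide c d by (simp add: field_simps)
  note closed = lr_amp_closed_form[OF this, of \<alpha> \<beta> p q,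
      unfolded binom_sum_of_real binom_sum_shift_of_real, folded S_def T_def T'_def X_def Y_def]
  have scale: "(cmod (a ^ p * d ^ q * w))\<^sup>2 = A ^ (p + q) * (cmod w)\<^sup>2" for w
    by (simp add: A_def norm_mult norm_power unitary2_cmod_d power_add power_mult_distrib
        mult.commute flip: power_mult)
  have first: "(cmod (d * X * of_real T + b * Y * of_real S))\<^sup>2
      = A * (cmod X)\<^sup>2 * T\<^sup>2 + B * (cmod Y)\<^sup>2 * S\<^sup>2 + T * S * \<rho>"
    unfolding cmod_real_combination_square \<rho>_def
    by (simp add: A_def B_def norm_mult unitary2_cmod_d power_mult_distrib)
  have second: "(cmod (a * Y * of_real T' + c * X * of_real S))\<^sup>2
      = A * (cmod Y)\<^sup>2 * T'\<^sup>2 + B * (cmod X)\<^sup>2 * S\<^sup>2 - T' * S * \<rho>"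
    unfolding cmod_real_combination_square \<rho>_def unitary2_interference_conj
    by (simp add: A_def B_def norm_mult unitary2_cmod_c power_mult_distrib algebra_simps)
  show ?thesis
    unfolding closed fst_conv snd_conv scale first second by (simp add: algebra_simps)
qed

lemma qw_prob_closed_form:
  fixes \<alpha> \<beta> :: complex and n k :: nat
  assumes "1 \<le> k" and "k < n"
  defines "A \<equiv> (cmod a)\<^sup>2" and "B \<equiv> (cmod b)\<^sup>2"
    and "X \<equiv> a * \<alpha> + b * \<beta>" and "Y \<equiv> c * \<alpha> + d * \<beta>"
  defines "S \<equiv> binom_sum (- B / A) (k - 1) (n - k - 1)"
    and "T \<equiv> binom_sum_shift (- B / A) (k - 1) (n - k - 1)"
    and "T' \<equiv> binom_sum_shift (- B / A) (n - k - 1) (k - 1)"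
    and "\<rho> \<equiv> 2 * Re (d * X * cnj (b * Y))"
  shows "qw_prob a b c d \<alpha> \<beta> n (int n - 2 * int k)
    = A ^ (n - 2) * (A * (cmod X)\<^sup>2 * T\<^sup>2 + B * (cmod Y)\<^sup>2 * S\<^sup>2
        + A * (cmod Y)\<^sup>2 * T'\<^sup>2 + B * (cmod X)\<^sup>2 * S\<^sup>2 + (T - T') * S * \<rho>)"
proof -
  obtain p q where k: "k = Suc p" and nk: "n - k = Suc q"
    using assms(1,2) by (rule inner_index_SucE)
  then have idx: "k - 1 = p" "n - k - 1 = q" "n - 2 = p + q"
    by auto
  have "qw_prob a b c d \<alpha> \<beta> n (int n - 2 * int k)
      = (cmod (fst (lr_amp a b c d \<alpha> \<beta> (Suc p) (Suc q))))\<^sup>2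
        + (cmod (snd (lr_amp a b c d \<alpha> \<beta> (Suc p) (Suc q))))\<^sup>2"
    unfolding qw_prob_eq_lr_amp[OF less_imp_le[OF assms(2)]] nk
    unfolding k ..
  also note lr_prob_closed_form
  finally show ?thesis
    unfolding A_def B_def X_def Y_def S_def T_def T'_def \<rho>_def idx .
qed

lemma unitary2_cmod_diff_square:
  "(cmod (a * \<alpha> + b * \<beta>))\<^sup>2 - (cmod (c * \<alpha> + d * \<beta>))\<^sup>2
    = ((cmod a)\<^sup>2 - (cmod b)\<^sup>2) * ((cmod \<alpha>)\<^sup>2 - (cmod \<beta>)\<^sup>2)
      + 2 * Re (a * \<alpha> * cnj (b * \<beta>) + cnj (a * \<alpha>) * b * \<beta>)"
  unfolding cmod_add_mult_square[of a \<alpha> b \<beta>] unitary2_cmod_snd_square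
  by (simp add: algebra_simps)

lemma qw_prob_extremes:
  fixes \<alpha> \<beta> :: complex
  assumes "n \<ge> 1"
  shows "qw_prob a b c d \<alpha> \<beta> n (int n) = ((cmod a)\<^sup>2) ^ (n - 1) * (cmod (c * \<alpha> + d * \<beta>))\<^sup>2"
    and "qw_prob a b c d \<alpha> \<beta> n (- int n) = ((cmod a)\<^sup>2) ^ (n - 1) * (cmod (a * \<alpha> + b * \<beta>))\<^sup>2"
proof -
  obtain r where n: "n = Suc r"
    using assms by (cases n) auto
  show "qw_prob a b c d \<alpha> \<beta> n (int n) = ((cmod a)\<^sup>2) ^ (n - 1) * (cmod (c * \<alpha> + d * \<beta>))\<^sup>2"
    using qw_prob_eq_lr_amp[of 0 n a b c d \<alpha> \<beta>]
    by (simp add: n lr_amp_0_left norm_mult norm_power unitary2_cmod_d power_mult_distrib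
        mult.commute flip: power_mult del: lr_amp.simps)
  show "qw_prob a b c d \<alpha> \<beta> n (- int n) = ((cmod a)\<^sup>2) ^ (n - 1) * (cmod (a * \<alpha> + b * \<beta>))\<^sup>2"
    using qw_prob_eq_lr_amp[of n n a b c d \<alpha> \<beta>]
    by (simp add: n lr_amp_0_right norm_mult norm_power power_mult_distrib mult.commute
        flip: power_mult del: lr_amp.simps)
qed

lemma qw_prob_extremes_diff:
  assumes "n \<ge> 1"
  shows "qw_prob a b c d \<alpha> \<beta> n (int n) - qw_prob a b c d \<alpha> \<beta> n (- int n)
    = - (((cmod a)\<^sup>2) ^ (n - 1) * (((cmod a)\<^sup>2 - (cmod b)\<^sup>2) * ((cmod \<alpha>)\<^sup>2 - (cmod \<beta>)\<^sup>2)
        + 2 * Re (a * \<alpha> * cnj (b * \<beta>) + cnj (a * \<alpha>) * b * \<beta>)))"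
  unfolding qw_prob_extremes[OF assms] unitary2_cmod_diff_square[symmetric]
  by (simp add: algebra_simps)

context
  fixes \<alpha> \<beta> :: complex
  assumes normalized: "(cmod \<alpha>)\<^sup>2 + (cmod \<beta>)\<^sup>2 = 1"
begin

lemma unitary2_preserves_norm: "(cmod (a * \<alpha> + b * \<beta>))\<^sup>2 + (cmod (c * \<alpha> + d * \<beta>))\<^sup>2 = 1"
proof -
  have "(cmod (a * \<alpha> + b * \<beta>))\<^sup>2 + (cmod (c * \<alpha> + d * \<beta>))\<^sup>2
      = ((cmod a)\<^sup>2 + (cmod b)\<^sup>2) * ((cmod \<alpha>)\<^sup>2 + (cmod \<beta>)\<^sup>2)"
    unfolding cmod_add_mult_square[of a \<alpha> b \<beta>] unitary2_cmod_snd_square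
    by (simp add: algebra_simps)
  then show ?thesis
    using unitary2_cmod_first_row normalized by simp
qed

lemma qw_prob_extremes_add:
  assumes "n \<ge> 1"
  shows "qw_prob a b c d \<alpha> \<beta> n (int n) + qw_prob a b c d \<alpha> \<beta> n (- int n) = ((cmod a)\<^sup>2) ^ (n - 1)"
  unfolding qw_prob_extremes[OF assms] using unitary2_preserves_norm by (simp flip: distrib_left)

lemma qw_prob_mirror_sigma:
  fixes n k :: nat
  assumes "1 \<le> k" and "k < n"
  defines "A \<equiv> (cmod a)\<^sup>2" and "B \<equiv> (cmod b)\<^sup>2"
    and "D \<equiv> (cmod \<alpha>)\<^sup>2 - (cmod \<beta>)\<^sup>2"
    and "R \<equiv> Re (a * \<alpha> * cnj (b * \<beta>) + cnj (a * \<alpha>) * b * \<beta>)"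
    and "P \<equiv> \<lambda>l. qw_prob a b c d \<alpha> \<beta> n (int n - 2 * int l)"
  defines "w \<equiv> \<lambda>\<gamma>. (- B / A) ^ \<gamma>
      * real ((k - 1) choose (\<gamma> - 1)) * real ((n - k - 1) choose (\<gamma> - 1))"
  defines "\<sigma>\<^sub>0 \<equiv> \<Sum>\<gamma>=1..k. w \<gamma>" and "\<sigma>\<^sub>1 \<equiv> \<Sum>\<gamma>=1..k. w \<gamma> / real \<gamma>"
  shows "P k + P (n - k) = A ^ (n - 1) *
      (((real n - real k)\<^sup>2 + (real k)\<^sup>2) * \<sigma>\<^sub>1\<^sup>2 - 2 * real n * \<sigma>\<^sub>1 * \<sigma>\<^sub>0 + 2 / B * \<sigma>\<^sub>0\<^sup>2)"
    and "P k - P (n - k) = A ^ (n - 1) * (real n - 2 * real k) *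
      ((- real n * (A - B) * D - 2 * real n * R) * \<sigma>\<^sub>1\<^sup>2 + 2 * (R / B - D) * \<sigma>\<^sub>1 * \<sigma>\<^sub>0)"
proof -
  define z where "z = - B / A"
  define S where "S = binom_sum z (k - 1) (n - k - 1)"
  define T where "T = binom_sum_shift z (k - 1) (n - k - 1)"
  define T' where "T' = binom_sum_shift z (n - k - 1) (k - 1)"
  define NX where "NX = (cmod (a * \<alpha> + b * \<beta>))\<^sup>2"
  define NY where "NY = (cmod (c * \<alpha> + d * \<beta>))\<^sup>2"
  define \<rho> where "\<rho> = 2 * Re (d * (a * \<alpha> + b * \<beta>) * cnj (b * (c * \<alpha> + d * \<beta>)))"
  define F where
    "F t t' = A * NX * t\<^sup>2 + B * NY * S\<^sup>2 + A * NY * t'\<^sup>2 + B * NX * S\<^sup>2 + (t - t') * S * \<rho>" for t t'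
  note closed_form =
    qw_prob_closed_form[where \<alpha> = \<alpha> and \<beta> = \<beta> and n = n,
      folded A_def B_def, folded z_def NX_def NY_def \<rho>_def]
  have Pk: "P k = A ^ (n - 2) * F T T'"
    unfolding P_def F_def S_def T_def T'_def closed_form[OF assms(1,2)] ..
  have mirror: "n - (n - k) = k" "1 \<le> n - k" "n - k < n"
    using assms by auto
  have Pnk: "P (n - k) = A ^ (n - 2) * F T' T"
    unfolding P_def F_def S_def T_def T'_def closed_form[OF mirror(2,3)] mirror(1)
      binom_sum_commute[of z "n - k - 1"] ..
  have zS: "z * S = \<sigma>\<^sub>0" and T: "T = real k * \<sigma>\<^sub>1 - \<sigma>\<^sub>0" and T': "T' = (real n - real k) * \<sigma>\<^sub>1 - \<sigma>\<^sub>0"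
    unfolding S_def T_def T'_def \<sigma>\<^sub>0_def \<sigma>\<^sub>1_def w_def z_def
    by (fact binom_sums_via_weights[OF assms(1,2)])+
  have "A \<noteq> 0" and B0: "B \<noteq> 0"
    using nonzero unfolding A_def B_def by auto
  with zS have S: "S = - (A / B) * \<sigma>\<^sub>0"
    unfolding z_def by (auto simp: field_simps)
  have "A + B = 1" and "NX + NY = 1" and "NX - NY = (A - B) * D + 2 * R"
    and "\<rho> = (A - B) * R - 2 * A * B * D"
    unfolding A_def B_def D_def R_def NX_def NY_def \<rho>_def
    by (fact unitary2_cmod_first_row unitary2_preserves_norm unitary2_cmod_diff_square
        unitary2_interference_Re)+
  note forms = mirror_prob_forms[OF this(1) B0 this(2-4) T T' S]
  have "n - 1 = Suc (n - 2)"
    using assms(1,2) by linarith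
  then have An: "A ^ (n - 1) = A ^ (n - 2) * A"
    by (simp add: mult.commute)
  have "P k + P (n - k) = A ^ (n - 2) * (F T T' + F T' T)"
    unfolding Pk Pnk by (simp add: distrib_left)
  also have "F T T' + F T' T = A * (((real n - real k)\<^sup>2 + (real k)\<^sup>2) * \<sigma>\<^sub>1\<^sup>2
      - 2 * real n * \<sigma>\<^sub>1 * \<sigma>\<^sub>0 + 2 / B * \<sigma>\<^sub>0\<^sup>2)"
    unfolding F_def by (rule forms(1))
  finally show "P k + P (n - k) = A ^ (n - 1) *
      (((real n - real k)\<^sup>2 + (real k)\<^sup>2) * \<sigma>\<^sub>1\<^sup>2 - 2 * real n * \<sigma>\<^sub>1 * \<sigma>\<^sub>0 + 2 / B * \<sigma>\<^sub>0\<^sup>2)"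
    unfolding An by simp
  have "P k - P (n - k) = A ^ (n - 2) * (F T T' - F T' T)"
    unfolding Pk Pnk by (simp add: right_diff_distrib)
  also have "F T T' - F T' T = A * (real n - 2 * real k) *
      ((- real n * (A - B) * D - 2 * real n * R) * \<sigma>\<^sub>1\<^sup>2 + 2 * (R / B - D) * \<sigma>\<^sub>1 * \<sigma>\<^sub>0)"
    unfolding F_def by (rule forms(2))
  finally show "P k - P (n - k) = A ^ (n - 1) * (real n - 2 * real k) *
      ((- real n * (A - B) * D - 2 * real n * R) * \<sigma>\<^sub>1\<^sup>2 + 2 * (R / B - D) * \<sigma>\<^sub>1 * \<sigma>\<^sub>0)"
    unfolding An by simp
qed

lemma qw_prob_mirror_double_sums:
  fixes n k m :: nat
  assumes "1 \<le> k" and "k < n"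
  defines "A \<equiv> (cmod a)\<^sup>2" and "B \<equiv> (cmod b)\<^sup>2"
    and "D \<equiv> (cmod \<alpha>)\<^sup>2 - (cmod \<beta>)\<^sup>2"
    and "R \<equiv> Re (a * \<alpha> * cnj (b * \<beta>) + cnj (a * \<alpha>) * b * \<beta>)"
    and "P \<equiv> \<lambda>l. qw_prob a b c d \<alpha> \<beta> n (int n - 2 * int l)"
    and "C \<equiv> (\<lambda>k \<gamma> \<delta>::nat. (- (cmod b)\<^sup>2 / (cmod a)\<^sup>2) ^ (\<gamma> + \<delta>)
              * real ((k - 1) choose (\<gamma> - 1)) * real ((k - 1) choose (\<delta> - 1))
              * real ((n - k - 1) choose (\<gamma> - 1)) * real ((n - k - 1) choose (\<delta> - 1)))"
  shows "(real n - 2 * real k) ^ m * (P k + P (n - k)) = A ^ (n - 1) *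
      (\<Sum>\<gamma>=1..k. \<Sum>\<delta>=1..k. C k \<gamma> \<delta> * (real n - 2 * real k) ^ m / (real \<gamma> * real \<delta>)
        * ((real n - real k)\<^sup>2 + (real k)\<^sup>2 - real n * (real \<gamma> + real \<delta>)
           + 2 * real \<gamma> * real \<delta> / B))"
    and "(real n - 2 * real k) ^ m * (P k - P (n - k)) = A ^ (n - 1) *
      (\<Sum>\<gamma>=1..k. \<Sum>\<delta>=1..k. C k \<gamma> \<delta> * (real n - 2 * real k) ^ (m + 1) / (real \<gamma> * real \<delta>)
        * (- (real n * (A - B) + real \<gamma> + real \<delta>) * D
           + ((real \<gamma> + real \<delta>) / B - 2 * real n) * R))"
proof -
  define w where
    "w \<gamma> = (- B / A) ^ \<gamma> * real ((k - 1) choose (\<gamma> - 1)) * real ((n - k - 1) choose (\<gamma> - 1))"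
    for \<gamma>
  define \<sigma>\<^sub>0 where "\<sigma>\<^sub>0 = (\<Sum>\<gamma>=1..k. w \<gamma>)"
  define \<sigma>\<^sub>1 where "\<sigma>\<^sub>1 = (\<Sum>\<gamma>=1..k. w \<gamma> / real \<gamma>)"
  have pair: "P k + P (n - k) = A ^ (n - 1) *
      (((real n - real k)\<^sup>2 + (real k)\<^sup>2) * \<sigma>\<^sub>1\<^sup>2 - 2 * real n * \<sigma>\<^sub>1 * \<sigma>\<^sub>0 + 2 / B * \<sigma>\<^sub>0\<^sup>2)"
    "P k - P (n - k) = A ^ (n - 1) * (real n - 2 * real k) *
      ((- real n * (A - B) * D - 2 * real n * R) * \<sigma>\<^sub>1\<^sup>2 + 2 * (R / B - D) * \<sigma>\<^sub>1 * \<sigma>\<^sub>0)"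
    unfolding A_def B_def D_def R_def P_def \<sigma>\<^sub>0_def \<sigma>\<^sub>1_def w_def
    by (rule qw_prob_mirror_sigma[OF assms(1,2)])+
  have factor: "(\<Sum>\<gamma>=1..k. \<Sum>\<delta>=1..k. C k \<gamma> \<delta> * y / (real \<gamma> * real \<delta>)
        * (c\<^sub>0 + c\<^sub>1 * (real \<gamma> + real \<delta>) + c\<^sub>2 * (real \<gamma> * real \<delta>)))
      = y * (c\<^sub>0 * \<sigma>\<^sub>1\<^sup>2 + 2 * c\<^sub>1 * \<sigma>\<^sub>1 * \<sigma>\<^sub>0 + c\<^sub>2 * \<sigma>\<^sub>0\<^sup>2)" for y c\<^sub>0 c\<^sub>1 c\<^sub>2
    unfolding C_def \<sigma>\<^sub>0_def \<sigma>\<^sub>1_def w_def A_def B_def by (rule sum_sum_binom_weights)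
  have even_bracket: "(real n - real k)\<^sup>2 + (real k)\<^sup>2 - real n * (real \<gamma> + real \<delta>)
           + 2 * real \<gamma> * real \<delta> / B
      = ((real n - real k)\<^sup>2 + (real k)\<^sup>2) + (- real n) * (real \<gamma> + real \<delta>)
        + 2 / B * (real \<gamma> * real \<delta>)"
    for \<gamma> \<delta> :: nat
    by simp
  have odd_bracket: "- (real n * (A - B) + real \<gamma> + real \<delta>) * D
           + ((real \<gamma> + real \<delta>) / B - 2 * real n) * R
      = (- real n * (A - B) * D - 2 * real n * R) + (R / B - D) * (real \<gamma> + real \<delta>)
        + 0 * (real \<gamma> * real \<delta>)"
    for \<gamma> \<delta> :: nat
    by (simp add: algebra_simps add_divide_distrib)
  show "(real n - 2 * real k) ^ m * (P k + P (n - k)) = A ^ (n - 1) *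
      (\<Sum>\<gamma>=1..k. \<Sum>\<delta>=1..k. C k \<gamma> \<delta> * (real n - 2 * real k) ^ m / (real \<gamma> * real \<delta>)
        * ((real n - real k)\<^sup>2 + (real k)\<^sup>2 - real n * (real \<gamma> + real \<delta>)
           + 2 * real \<gamma> * real \<delta> / B))"
    unfolding even_bracket factor pair(1) by (simp add: algebra_simps)
  show "(real n - 2 * real k) ^ m * (P k - P (n - k)) = A ^ (n - 1) *
      (\<Sum>\<gamma>=1..k. \<Sum>\<delta>=1..k. C k \<gamma> \<delta> * (real n - 2 * real k) ^ (m + 1) / (real \<gamma> * real \<delta>)
        * (- (real n * (A - B) + real \<gamma> + real \<delta>) * D
           + ((real \<gamma> + real \<delta>) / B - 2 * real n) * R))"
    unfolding odd_bracket factor pair(2) by (simp add: algebra_simps)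
qed

end

end

section \<open>The moments\<close>

lemma moment_parity_split:
  fixes M x a W p q :: real and y P Q u v :: "nat \<Rightarrow> real"
  assumes M: "M = x ^ m * (p + (-1) ^ m * q) + (\<Sum>k\<in>I. y k ^ m * (P k + (-1) ^ m * Q k))"
    and add: "p + q = a" and diff: "p - q = - (a * W)"
    and add_k: "\<And>k. k \<in> I \<Longrightarrow> y k ^ m * (P k + Q k) = a * u k"
    and diff_k: "\<And>k. k \<in> I \<Longrightarrow> y k ^ m * (P k - Q k) = a * v k"
  shows "(odd m \<longrightarrow> M = a * (- (x ^ m) * W + sum v I)) \<and> (even m \<longrightarrow> M = a * (x ^ m + sum u I))"
proof (intro conjI impI)
  assume "odd m"
  then have "M = x ^ m * (p - q) + (\<Sum>k\<in>I. y k ^ m * (P k - Q k))"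
    using M by simp
  also have "(\<Sum>k\<in>I. y k ^ m * (P k - Q k)) = a * sum v I"
    using diff_k by (simp add: sum_distrib_left)
  finally show "M = a * (- (x ^ m) * W + sum v I)"
    using diff by (simp add: algebra_simps)
next
  assume "even m"
  then have "M = x ^ m * (p + q) + (\<Sum>k\<in>I. y k ^ m * (P k + Q k))"
    using M by simp
  also have "(\<Sum>k\<in>I. y k ^ m * (P k + Q k)) = a * sum u I"
    using add_k by (simp add: sum_distrib_left)
  finally show "M = a * (x ^ m + sum u I)"
    using add by (simp add: algebra_simps)
qed

theorem proposition2:
  fixes a b c d \<alpha> \<beta> :: complex and n m :: nat
  assumes U: "unitary2 a b c d"
    and nz: "a * b * c * d \<noteq> 0"
    and phi: "(cmod \<alpha>)\<^sup>2 + (cmod \<beta>)\<^sup>2 = 1"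
    and n: "n \<ge> 1" and m: "m \<ge> 1"
  defines "A \<equiv> (cmod a)\<^sup>2" and "B \<equiv> (cmod b)\<^sup>2"
    and "D \<equiv> (cmod \<alpha>)\<^sup>2 - (cmod \<beta>)\<^sup>2"
    and "R \<equiv> Re (a * \<alpha> * cnj (b * \<beta>) + cnj (a * \<alpha>) * b * \<beta>)"
    and "C \<equiv> (\<lambda>k \<gamma> \<delta>::nat. (- (cmod b)\<^sup>2 / (cmod a)\<^sup>2) ^ (\<gamma> + \<delta>)
              * real ((k - 1) choose (\<gamma> - 1)) * real ((k - 1) choose (\<delta> - 1))
              * real ((n - k - 1) choose (\<gamma> - 1)) * real ((n - k - 1) choose (\<delta> - 1)))"
  shows "(odd m \<longrightarrow>
           qw_moment a b c d \<alpha> \<beta> n m =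
             A ^ (n - 1) *
              (- (real n ^ m) * ((A - B) * D + 2 * R)
               + (\<Sum>k=1..(n - 1) div 2. \<Sum>\<gamma>=1..k. \<Sum>\<delta>=1..k.
                   C k \<gamma> \<delta> * (real n - 2 * real k) ^ (m + 1) / (real \<gamma> * real \<delta>)
                   * (- (real n * (A - B) + real \<gamma> + real \<delta>) * D
                      + ((real \<gamma> + real \<delta>) / B - 2 * real n) * R))))
       \<and> (even m \<longrightarrow>
           qw_moment a b c d \<alpha> \<beta> n m =
             A ^ (n - 1) *
              (real n ^ m
               + (\<Sum>k=1..(n - 1) div 2. \<Sum>\<gamma>=1..k. \<Sum>\<delta>=1..k.
                   C k \<gamma> \<delta> * (real n - 2 * real k) ^ m / (real \<gamma> * real \<delta>)
                   * ((real n - real k)\<^sup>2 + (real k)\<^sup>2 - real n * (real \<gamma> + real \<delta>)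
                      + 2 * real \<gamma> * real \<delta> / B))))"
proof -
  have range: "1 \<le> k" "k < n" if "k \<in> {1..(n - 1) div 2}" for k
    using that n by auto
  show ?thesis
    unfolding A_def B_def D_def R_def C_def
    by (rule moment_parity_split[OF qw_moment_eq_pair_sum[OF n m]
          qw_prob_extremes_add[OF U nz phi n] qw_prob_extremes_diff[OF U nz n]])
      (rule qw_prob_mirror_double_sums[OF U nz phi range]; assumption)+
qed

end
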